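(* Let $(S,H)$ be a polarized K3 surface with $H^2=2d$, let $U\in D^b(S)$ be a spherical object with Mukai vector $(a,bH,c)$ for integers $a>0$, $b$, $c$, and let $\tau_U$ be the Hodge isometry of $\widetilde H(S,\mathbb Z)$ induced by the autoequivalence $\mathsf T_U\circ\mathsf T_{\mathcal O_S}\circ(-\otimes\mathcal O_S(H))$. Then $\tau_U^2=\mathrm{id}$ if and only if $d=5$ and $(a,b,c)$ belongs to the set $$\{(F_n+F_{n-2},-F_n,F_{n+2}+F_n),\ (F_{n+2}+F_n,-F_n,F_n+F_{n-2})\ :\ n\ge0\text{ even}\},$$ where $(F_n)_{n\in\mathbb Z}$ is defined by $F_n=1$ for $n\le1$ and $F_{n+2}=F_{n+1}+F_n$ for $n\ge0$.
   Context: An object $U\in D^b(S)$ is spherical if $\mathrm{Ext}^*(U,U)\cong H^*(S^2,\mathbb C)$; $\mathsf T_U$ is the spherical twist $F\mapsto\mathrm{Cone}(\mathrm{RHom}(U,F)\otimes U\to F)$. The Mukai vector is $v(E)=(\mathrm{rk}E,c_1(E),\mathrm{rk}E+c_1(E)^2/2-c_2(E))\in\widetilde H(S,\mathbb Z)$, and autoequivalences act on $\widetilde H(S,\mathbb Z)$ via their cohomological Fourier–Mukai transforms (Hodge isometries for the Mukai pairing). *)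

theory Defs
  imports Main
begin

text \<open>Model of the relevant part of the Mukai lattice of a polarized K3 surface (S,H), H^2 = 2d.
  A triple (r,s,t) stands for the Mukai vector (r, sH, t). The Mukai pairing is
  <(r,D,t),(r',D',t')> = D.D' - r t' - r' t.\<close>

type_synonym mvec = "int \<times> int \<times> int"

fun mukai_pair :: "int \<Rightarrow> mvec \<Rightarrow> mvec \<Rightarrow> int" where
  "mukai_pair d (r, s, t) (r', s', t') = 2 * d * s * s' - r * t' - r' * t"

fun madd :: "mvec \<Rightarrow> mvec \<Rightarrow> mvec" where
  "madd (r, s, t) (r', s', t') = (r + r', s + s', t + t')"

fun mscale :: "int \<Rightarrow> mvec \<Rightarrow> mvec" where
  "mscale k (r, s, t) = (k * r, k * s, k * t)"

text \<open>Cohomological action of the spherical twist T_U, v = v(U):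
  x \<mapsto> x - \<chi>(U,F) v = x + <v,x> v.\<close>
definition twist_action :: "int \<Rightarrow> mvec \<Rightarrow> mvec \<Rightarrow> mvec" where
  "twist_action d v x = madd x (mscale (mukai_pair d v x) v)"

text \<open>Cohomological action of (- \<otimes> O_S(H)): multiplication by exp(H) = (1, H, d).\<close>
fun tensor_H_action :: "int \<Rightarrow> mvec \<Rightarrow> mvec" where
  "tensor_H_action d (r, s, t) = (r, s + r, t + 2 * d * s + d * r)"

text \<open>tau_U: action of T_U \<circ> T_{O_S} \<circ> (- \<otimes> O_S(H)); v(O_S) = (1,0,1).\<close>
definition tau :: "int \<Rightarrow> mvec \<Rightarrow> mvec \<Rightarrow> mvec" where
  "tau d v x = twist_action d v (twist_action d (1, 0, 1) (tensor_H_action d x))"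

fun Fnat :: "nat \<Rightarrow> int" where
  "Fnat 0 = 1"
| "Fnat (Suc 0) = 1"
| "Fnat (Suc (Suc n)) = Fnat (Suc n) + Fnat n"

definition Fib :: "int \<Rightarrow> int" where
  "Fib n = (if n \<le> 1 then 1 else Fnat (nat n))"

definition fib_set :: "mvec set" where
  "fib_set = {(Fib n + Fib (n - 2), - Fib n, Fib (n + 2) + Fib n) | n. n \<ge> 0 \<and> even n}
           \<union> {(Fib (n + 2) + Fib n, - Fib n, Fib n + Fib (n - 2)) | n. n \<ge> 0 \<and> even n}"

end

theory Submission
  imports Defs
begin

(* Write v = (a, bH, c); then v^2 = -2 reads a c = d b^2 + 1. Expanding the action of the two
   reflections and of exp(H), tau^2 = id turns out to be equivalent to a + c + d b = 0: this
   relation suffices, and conversely tau^2 fixing the point class (0,0,1) forces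
   d b^2 (a + c + d b)^2 = 0, while for b = 0 the two twists cancel and tau is just exp(H).
   With B = -b > 0 and c = d B - a the relation becomes a^2 - d a B + d B^2 = -1, whose positive
   solutions are permuted by the Vieta involutions a -> d B - a and B -> a - B. Descending along
   them ends at a solution with a <= d B - a and 2 B <= a, which exists only for d = 5 and
   (a, B) = (2, 1); for d = 5 the orbit of (2, 1) is the Fibonacci family, as
   F (n + 2) = 3 F n - F (n - 2) for even n >= 0. *)

lemma Fib_le_1 [simp]: "n \<le> 1 \<Longrightarrow> Fib n = 1"
  by (simp add: Fib_def)

lemma Fib_add_2: "0 \<le> n \<Longrightarrow> Fib (n + 2) = Fib (n + 1) + Fib n"
proof -
  assume "0 \<le> n"
  then obtain k where "n = int k" by (metis nonneg_int_cases)
  then show ?thesis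
    by (cases k) (simp_all add: Fib_def nat_add_distrib numeral_eq_Suc)
qed

lemma Fib_add_2_even:
  assumes "0 \<le> n" "even n"
  shows "Fib (n + 2) = 3 * Fib n - Fib (n - 2)"
proof (cases "n = 0")
  case True
  then show ?thesis using Fib_add_2[of 0] by simp
next
  case False
  with assms have "2 \<le> n" by presburger
  then show ?thesis
    using Fib_add_2[of n] Fib_add_2[of "n - 1"] Fib_add_2[of "n - 2"]
    by (simp add: add.commute)
qed

definition fib_triple :: "int \<Rightarrow> mvec" where
  "fib_triple n = (Fib n + Fib (n - 2), - Fib n, Fib (n + 2) + Fib n)"

lemma mem_fib_set_iff:
  "(a, b, c) \<in> fib_set \<longleftrightarrow>
     (\<exists>n \<ge> 0. even n \<and> (fib_triple n = (a, b, c) \<or> fib_triple n = (c, b, a)))"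
  unfolding fib_set_def fib_triple_def by auto

lemma fib_triple_mem_fib_set:
  "0 \<le> n \<Longrightarrow> even n \<Longrightarrow> fib_triple n = (a, b, c) \<or> fib_triple n = (c, b, a) \<Longrightarrow>
    (a, b, c) \<in> fib_set"
  unfolding mem_fib_set_iff by blast

lemma fib_set_swap: "(a, b, c) \<in> fib_set \<Longrightarrow> (c, b, a) \<in> fib_set"
  unfolding mem_fib_set_iff by blast

lemma fib_set_sum: "(a, b, c) \<in> fib_set \<Longrightarrow> a + c + 5 * b = 0"
  unfolding mem_fib_set_iff fib_triple_def using Fib_add_2_even by force

lemma fib_set_base: "(2, -1, 3) \<in> fib_set"
proof -
  have "fib_triple 0 = (2, -1, 3)"
    using Fib_add_2[of 0] by (simp add: fib_triple_def)
  then show ?thesis using fib_triple_mem_fib_set[of 0] by auto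
qed

lemma fib_set_jump:
  assumes "(a, - B, 5 * B - a) \<in> fib_set"
  shows "(a, - (a - B), 5 * (a - B) - a) \<in> fib_set"
proof -
  obtain n where n: "0 \<le> n" "even n"
    and "fib_triple n = (a, - B, 5 * B - a) \<or> fib_triple n = (5 * B - a, - B, a)"
    using assms unfolding mem_fib_set_iff by blast
  then consider "fib_triple n = (a, - B, 5 * B - a)" "n = 0"
    | "fib_triple n = (a, - B, 5 * B - a)" "2 \<le> n"
    | "fib_triple n = (5 * B - a, - B, a)"
    by fastforce
  then show ?thesis
  proof cases
    case 1
    then have "a = 2" "B = 1"
      using Fib_add_2[of 0] by (simp_all add: fib_triple_def)
    then show ?thesis using fib_set_base by simp
  next
    case 2
    with n Fib_add_2_even[of "n - 2"] have "fib_triple (n - 2) = (4 * a - 5 * B, B - a, a)"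
      by (simp add: fib_triple_def)
    with 2 n show ?thesis using fib_triple_mem_fib_set[of "n - 2"] by auto
  next
    case 3
    with n Fib_add_2_even[of "n + 2"] have "fib_triple (n + 2) = (a, B - a, 4 * a - 5 * B)"
      by (simp add: fib_triple_def)
    with n show ?thesis using fib_triple_mem_fib_set[of "n + 2"] by auto
  qed
qed

lemma vieta_minimal_solution:
  fixes d a B :: int
  assumes "0 < d" "0 < B"
    and eq: "a^2 - d * a * B + d * B^2 = -1"
    and a_le: "a \<le> d * B - a" and B_le: "2 * B \<le> a"
  shows "d = 5 \<and> a = 2 \<and> B = 1"
proof (cases "a = 2 * B")
  case True
  with eq have "(d - 4) * B^2 = 1"
    by (simp add: algebra_simps power2_eq_square)
  moreover have "0 < B^2" using \<open>0 < B\<close> by simp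
  ultimately have "d - 4 = 1" "B^2 = 1"
    by (simp_all add: pos_zmult_eq_1_iff mult.commute[of "d - 4"])
  with \<open>0 < B\<close> True show ?thesis by (simp add: power2_eq_1_iff)
next
  case False
  have "a * a \<le> a * (d * B - a)"
    using a_le B_le \<open>0 < B\<close> by (intro mult_left_mono) auto
  with eq have a_sq: "a^2 \<le> d * B^2 + 1"
    by (simp add: algebra_simps power2_eq_square)
  have "d * B * (a - 2 * B) = a^2 + 1 - d * B^2"
    using eq by (simp add: algebra_simps power2_eq_square)
  also have "\<dots> \<le> 2" using a_sq by simp
  finally have "d * B * (a - 2 * B) \<le> 2" .
  moreover have "d * B * 1 \<le> d * B * (a - 2 * B)"
    using False B_le \<open>0 < d\<close> \<open>0 < B\<close> by (intro mult_left_mono) auto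
  ultimately have "d * B * B \<le> 2 * B"
    using \<open>0 < B\<close> by (intro mult_right_mono) auto
  with a_sq have "a^2 \<le> 2 * B + 1" by (simp add: power2_eq_square)
  moreover have "2 * B + 1 \<le> a" using False B_le by simp
  moreover have "a * 1 < a * a" using B_le \<open>0 < B\<close> by (intro mult_strict_left_mono) auto
  ultimately show ?thesis by (simp add: power2_eq_square)
qed

lemma vieta_jumping_fib_set:
  fixes d a B :: int
  assumes "0 < d" "0 < a" "0 < B" "a^2 - d * a * B + d * B^2 = -1"
  shows "d = 5 \<and> (a, - B, d * B - a) \<in> fib_set"
  using assms(2-)
proof (induction "nat (a + B)" arbitrary: a B rule: less_induct)
  case less
  note a_pos = \<open>0 < a\<close> and B_pos = \<open>0 < B\<close> and eq = \<open>a^2 - d * a * B + d * B^2 = -1\<close>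
  consider "d * B - a < a" | "a \<le> d * B - a" "a < 2 * B" | "a \<le> d * B - a" "2 * B \<le> a"
    by linarith
  then show ?case
  proof cases
    case 1
    define a' where "a' = d * B - a"
    have "a * a' = d * B^2 + 1"
      using eq by (simp add: a'_def algebra_simps power2_eq_square)
    also have "\<dots> > 0" using \<open>0 < d\<close> by (simp add: add_nonneg_pos)
    finally have "0 < a'" using a_pos by (simp add: zero_less_mult_iff)
    moreover have "a'^2 - d * a' * B + d * B^2 = -1"
      using eq by (simp add: a'_def algebra_simps power2_eq_square)
    moreover have "nat (a' + B) < nat (a + B)" using 1 a'_def a_pos B_pos by simp
    ultimately have "d = 5 \<and> (a', - B, d * B - a') \<in> fib_set"
      using B_pos less.hyps by blast
    then show ?thesis by (auto simp: a'_def dest: fib_set_swap)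
  next
    case 2
    define B' where "B' = a - B"
    have "d * B * B' = a^2 + 1"
      using eq by (simp add: B'_def algebra_simps power2_eq_square)
    also have "\<dots> > 0" by (simp add: add_nonneg_pos)
    finally have "0 < B'"
      using mult_pos_pos[OF \<open>0 < d\<close> B_pos] by (simp add: zero_less_mult_iff)
    moreover have "a^2 - d * a * B' + d * B'^2 = -1"
      using eq by (simp add: B'_def algebra_simps power2_eq_square)
    moreover have "nat (a + B') < nat (a + B)" using 2 B'_def a_pos by simp
    ultimately have "d = 5 \<and> (a, - B', 5 * B' - a) \<in> fib_set"
      using a_pos less.hyps by fastforce
    then show ?thesis using fib_set_jump[of a B'] by (simp add: B'_def)
  next
    case 3
    with vieta_minimal_solution[OF \<open>0 < d\<close> B_pos eq] fib_set_base show ?thesis by simp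
  qed
qed

lemma tau_tau_eq_self:
  fixes d a b c :: int
  assumes "a * c = d * b^2 + 1" "a + c + d * b = 0"
  shows "tau d (a, b, c) (tau d (a, b, c) x) = x"
proof -
  obtain r s t where x: "x = (r, s, t)" by (cases x)
  have c: "c = - a - d * b" using assms(2) by simp
  have "a^2 + d * a * b + d * b^2 + 1 = 0"
    using assms(1) by (simp add: c algebra_simps power2_eq_square)
  then show ?thesis
    unfolding x c tau_def twist_action_def by simp algebra
qed

lemma tau_tau_point_class:
  fixes d a b c :: int
  assumes "a * c = d * b^2 + 1"
    and "tau d (a, b, c) (tau d (a, b, c) (0, 0, 1)) = (0, 0, 1)"
  shows "d * b^2 * (a + c + d * b)^2 = 0"
  using assms unfolding tau_def twist_action_def by simp algebra

lemma tau_involutive_iff: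
  fixes d a b c :: int
  assumes "d \<noteq> 0" and spherical: "a * c = d * b^2 + 1"
  shows "(\<forall>x. tau d (a, b, c) (tau d (a, b, c) x) = x) \<longleftrightarrow> a + c + d * b = 0"
proof
  assume involutive: "\<forall>x. tau d (a, b, c) (tau d (a, b, c) x) = x"
  have "b \<noteq> 0"
  proof
    assume "b = 0"
    with spherical have "(a, b, c) = (1, 0, 1) \<or> (a, b, c) = (-1, 0, -1)"
      by (auto simp: zmult_eq_1_iff)
    then have "tau d (a, b, c) (tau d (a, b, c) (1, 0, 0)) = (1, 2, 4 * d)"
      unfolding tau_def twist_action_def by auto
    with involutive show False by simp
  qed
  moreover have "d * b^2 * (a + c + d * b)^2 = 0"
    using tau_tau_point_class[OF spherical] involutive by blast
  ultimately show "a + c + d * b = 0" using \<open>d \<noteq> 0\<close> by simp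
next
  assume "a + c + d * b = 0"
  with spherical show "\<forall>x. tau d (a, b, c) (tau d (a, b, c) x) = x"
    using tau_tau_eq_self by blast
qed

lemma spherical_sum_eq_0_iff_fib_set:
  fixes d a b c :: int
  assumes "0 < d" "0 < a" and spherical: "a * c = d * b^2 + 1"
  shows "a + c + d * b = 0 \<longleftrightarrow> d = 5 \<and> (a, b, c) \<in> fib_set"
proof
  assume sum: "a + c + d * b = 0"
  have "b < 0"
  proof (rule ccontr)
    assume "\<not> b < 0"
    with \<open>0 < d\<close> have "0 \<le> d * b" by simp
    with sum \<open>0 < a\<close> have "c < 0" by linarith
    with \<open>0 < a\<close> have "a * c < 0" by (simp add: mult_pos_neg)
    moreover have "0 < d * b^2 + 1" using \<open>0 < d\<close> by (simp add: add_nonneg_pos)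
    ultimately show False using spherical by simp
  qed
  moreover have c: "c = d * (- b) - a" using sum by simp
  moreover have "a^2 - d * a * (- b) + d * (- b)^2 = -1"
    using spherical by (simp add: c algebra_simps power2_eq_square)
  ultimately show "d = 5 \<and> (a, b, c) \<in> fib_set"
    using vieta_jumping_fib_set[OF \<open>0 < d\<close> \<open>0 < a\<close>, of "- b"] by auto
next
  assume "d = 5 \<and> (a, b, c) \<in> fib_set"
  then show "a + c + d * b = 0" using fib_set_sum by simp
qed

theorem theoremA16:
  fixes d a b c :: int
  assumes "d > 0"
    and "a > 0"
    and "mukai_pair d (a, b, c) (a, b, c) = -2"
  shows "(\<forall>x. tau d (a, b, c) (tau d (a, b, c) x) = x) \<longleftrightarrow> d = 5 \<and> (a, b, c) \<in> fib_set"
proof -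
  have spherical: "a * c = d * b^2 + 1"
    using assms(3) by (simp add: algebra_simps power2_eq_square)
  show ?thesis
    using tau_involutive_iff[OF _ spherical] spherical_sum_eq_0_iff_fib_set[OF _ _ spherical]
      assms(1,2)
    by simp
qed

end
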